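(* Let $\mathcal{A}=\{\mathbf{A},\mathbf{B},\mathbf{C},\mathbf{D}\}$, let $\mathcal{R}^\dagger$ be the symmetric relation on $\mathcal{A}$ whose related pairs are exactly $\{\mathbf{A},\mathbf{B}\}$, $\{\mathbf{B},\mathbf{D}\}$, $\{\mathbf{D},\mathbf{C}\}$, and let $\mathcal{H}$ be the base graph on $\{1,\dots,n\}$ defined as follows: if $n$ is even, $\mathcal{H}$ has edges $\{\sigma(i),\sigma(i+1)\}$, $i=1,\dots,n$ (indices modulo $n$), for some permutation $\sigma$ of $\{1,\dots,n\}$; if $n$ is odd, for a fixed vertex $u$ and a bijection $\sigma$ from $\{1,\dots,n-1\}$ onto $\{1,\dots,n\}\setminus\{u\}$, $\mathcal{H}$ has edges $\{\sigma(i),\sigma(i+1)\}$, $i=1,\dots,n-1$ (indices modulo $n-1$), and $u$ is isolated. Let $\mu_\pm=\frac{1\pm\sqrt5}{2}$. Then there exist at least $(\sqrt2)^{n-1}$ shapes $S$ such that the preimage $P_S=\{v\in\mathcal{A}^n:\mathcal{H}_{\mathcal{R}^\dagger}(v)=S\}$ satisfies: (I) the subgraph of $Q_4^n$ induced by $P_S$ has a connected component with at least $\mu_+^n+\mu_-^n$ vertices; (II) $P_S$ has diameter $n$, i.e. there exist $v,v'\in P_S$ which differ in all $n$ coordinates.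
   Context: $Q_4^n$ is the graph on $\mathcal{A}^n$ in which two sequences are adjacent iff they differ in exactly one coordinate. For $v=(x_1,\dots,x_n)\in\mathcal{A}^n$, its shape $\mathcal{H}_{\mathcal{R}^\dagger}(v)$ is the graph with vertex set $\{1,\dots,n\}$ and edge set $\{\{i,k\}\in E_{\mathcal{H}}:(x_i,x_k)\in\mathcal{R}^\dagger\}$; a shape is any graph of this form. *)

theory Defs
  imports Complex_Main
begin

datatype letter = LA | LB | LC | LD

definition Rdag :: "(letter \<times> letter) set" where
  "Rdag = {(LA,LB),(LB,LA),(LB,LD),(LD,LB),(LD,LC),(LC,LD)}"

text \<open>Vertices of the base graph are 0..n-1 (0-based version of 1..n).
  Sequences in A^n are lists of length n.\<close>
definition words :: "nat \<Rightarrow> letter list set" where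
  "words n = {v. length v = n}"

definition base_edges_even :: "nat \<Rightarrow> (nat \<Rightarrow> nat) \<Rightarrow> nat set set" where
  "base_edges_even n \<sigma> = {{\<sigma> i, \<sigma> ((i + 1) mod n)} | i. i < n}"

definition base_edges_odd :: "nat \<Rightarrow> (nat \<Rightarrow> nat) \<Rightarrow> nat set set" where
  "base_edges_odd n \<sigma> = {{\<sigma> i, \<sigma> ((i + 1) mod (n - 1))} | i. i < n - 1}"

text \<open>Shape of v with respect to base graph edge set EH (vertex set fixed as {0..<n},
  so a shape is determined by its edge set).\<close>
definition shape :: "nat set set \<Rightarrow> letter list \<Rightarrow> nat set set" where
  "shape EH v = {e \<in> EH. \<exists>i k. e = {i, k} \<and> (v ! i, v ! k) \<in> Rdag}"

definition preimage :: "nat \<Rightarrow> nat set set \<Rightarrow> nat set set \<Rightarrow> letter list set" where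
  "preimage n EH S = {v \<in> words n. shape EH v = S}"

definition ham_adj :: "letter list \<Rightarrow> letter list \<Rightarrow> bool" where
  "ham_adj v w \<longleftrightarrow> length v = length w \<and> card {i. i < length v \<and> v ! i \<noteq> w ! i} = 1"

definition component :: "letter list set \<Rightarrow> letter list \<Rightarrow> letter list set" where
  "component P v = {w. (\<lambda>a b. a \<in> P \<and> b \<in> P \<and> ham_adj a b)\<^sup>*\<^sup>* v w}"

definition good_shape :: "nat \<Rightarrow> nat set set \<Rightarrow> nat set set \<Rightarrow> bool" where
  "good_shape n EH S \<longleftrightarrow>
     (\<exists>v \<in> words n. shape EH v = S) \<and>
     (\<exists>v \<in> preimage n EH S.
        real (card (component (preimage n EH S) v)) \<ge> ((1 + sqrt 5) / 2) ^ n + ((1 - sqrt 5) / 2) ^ n) \<and>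
     (\<exists>v \<in> preimage n EH S. \<exists>v' \<in> preimage n EH S. \<forall>i < n. v ! i \<noteq> v' ! i)"

end

theory Submission
  imports Defs "HOL-Number_Theory.Fib"
begin

text \<open>Split the even cycle \<open>\<sigma> 0, \<sigma> 1, \<dots>, \<sigma> (m - 1)\<close> of the base graph into \<open>m / 2\<close> blocks of two
  consecutive edges, block \<open>j\<close> having centre \<open>\<sigma> (2 j + 1)\<close>. For a set \<open>X\<close> of blocks consider the
  words in which the centres of the selected blocks carry B or C and all other vertices carry A or D,
  the letters C and A marking the vertices of a set \<open>I\<close>. Since \<open>R\<^sup>\<dagger>\<close> relates a letter of {A, D} to
  one of {B, C} unless both are marked, and never relates two letters of {A, D}, the shape of such
  a word is the union of the selected blocks as long as no selected edge has both ends in \<open>I\<close>.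
  Hence the \<open>2 ^ (m div 2) \<ge> \<surd>2 ^ (n - 1)\<close> choices of \<open>X\<close> give distinct shapes. Marking the
  vertices of an independent set of the base graph one at a time never leaves the preimage, so the
  component of the unmarked word has at least as many vertices as the base graph has independent
  sets; counting them along paths with Fibonacci numbers gives at least the Lucas number
  \<open>L\<^sub>n = \<mu>\<^sub>+\<^sup>n + \<mu>\<^sub>-\<^sup>n\<close> (in the odd case the isolated vertex doubles the count for the cycle).
  Marking exactly the centres, or exactly the other vertices, yields two words of the preimage
  that differ everywhere.\<close>

section \<open>Independent sets of paths and cycles\<close>

definition cycle_edges :: "nat \<Rightarrow> (nat \<Rightarrow> nat) \<Rightarrow> nat set set" where
  "cycle_edges m \<sigma> = {{\<sigma> i, \<sigma> ((i + 1) mod m)} | i. i < m}"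

definition indep_sets :: "nat \<Rightarrow> nat set set \<Rightarrow> nat set set" where
  "indep_sets n E = {I. I \<subseteq> {..<n} \<and> (\<forall>e\<in>E. \<not> e \<subseteq> I)}"

lemma finite_cycle_edges: "finite (cycle_edges m \<sigma>)"
  by (simp add: cycle_edges_def setcompr_eq_image)

lemma finite_indep_sets: "finite (indep_sets n E)"
  by (rule finite_subset[of _ "Pow {..<n}"]) (auto simp: indep_sets_def)

lemma insert_in_indep_sets:
  "I \<in> indep_sets n E \<Longrightarrow> u < n \<Longrightarrow> \<forall>e\<in>E. u \<notin> e \<Longrightarrow> insert u I \<in> indep_sets n E"
  unfolding indep_sets_def by blast

lemma lucas_closed_form:
  fixes \<phi> \<psi> :: real
  defines "\<phi> \<equiv> (1 + sqrt 5) / 2" and "\<psi> \<equiv> (1 - sqrt 5) / 2"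
  shows "real (fib (k + 2) + fib k) = \<phi> ^ (k + 1) + \<psi> ^ (k + 1)"
proof -
  have \<phi>: "\<phi>\<^sup>2 + 1 = sqrt 5 * \<phi>" and \<psi>: "\<psi>\<^sup>2 + 1 = - sqrt 5 * \<psi>"
    by (simp_all add: \<phi>_def \<psi>_def power2_eq_square field_simps)
  have fib: "real (fib n) = (\<phi> ^ n - \<psi> ^ n) / sqrt 5" for n
    unfolding \<phi>_def \<psi>_def by (rule fib_closed_form)
  have "real (fib (k + 2) + fib k) = (\<phi> ^ k * (\<phi>\<^sup>2 + 1) - \<psi> ^ k * (\<psi>\<^sup>2 + 1)) / sqrt 5"
    unfolding of_nat_add fib by (simp add: field_simps power_add power2_eq_square)
  also have "\<dots> = \<phi> ^ (k + 1) + \<psi> ^ (k + 1)"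
    unfolding \<phi> \<psi> by (simp add: field_simps)
  finally show ?thesis .
qed

lemma lucas_Suc_le_double: "fib (k + 4) + fib (k + 2) \<le> 2 * (fib (k + 3) + fib (k + 1))"
  using fib_Suc_mono[of k] by (simp add: numeral_eq_Suc)

definition path_indep_sets :: "nat \<Rightarrow> nat \<Rightarrow> nat set set" where
  "path_indep_sets a k = {K. K \<subseteq> {a..<a + k} \<and> (\<forall>i\<in>K. Suc i \<notin> K)}"

lemma path_indep_sets_Suc_Suc:
  "path_indep_sets a (k + 2) =
     path_indep_sets a (k + 1) \<union> insert (a + k + 1) ` path_indep_sets a k"
proof (intro equalityI subsetI)
  fix K assume "K \<in> path_indep_sets a (k + 2)"
  then have K: "K \<subseteq> {a..<a + k + 2}" "\<forall>i\<in>K. Suc i \<notin> K"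
    by (simp_all add: path_indep_sets_def)
  show "K \<in> path_indep_sets a (k + 1) \<union> insert (a + k + 1) ` path_indep_sets a k"
  proof (cases "a + k + 1 \<in> K")
    case True
    then have "a + k \<notin> K"
      using K(2) by force
    with K have "K - {a + k + 1} \<subseteq> {a..<a + k}"
      by (auto simp: subset_iff less_Suc_eq)
    with K(2) have "K - {a + k + 1} \<in> path_indep_sets a k"
      by (simp add: path_indep_sets_def)
    with True show ?thesis
      by (metis UnI2 image_eqI insert_Diff)
  next
    case False
    with K have "K \<subseteq> {a..<a + k + 1}"
      by (auto simp: subset_iff less_Suc_eq)
    with K(2) show ?thesis
      by (simp add: path_indep_sets_def)
  qed
next
  fix K assume "K \<in> path_indep_sets a (k + 1) \<union> insert (a + k + 1) ` path_indep_sets a k"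
  then show "K \<in> path_indep_sets a (k + 2)"
    by (auto simp: path_indep_sets_def)
qed

lemma finite_path_indep_sets: "finite (path_indep_sets a k)"
  by (rule finite_subset[of _ "Pow {a..<a + k}"]) (auto simp: path_indep_sets_def)

lemma card_path_indep_sets: "card (path_indep_sets a k) = fib (k + 2)"
proof (induction k rule: fib.induct)
  case 1
  have "path_indep_sets a 0 = {{}}" by (auto simp: path_indep_sets_def)
  then show ?case by simp
next
  case 2
  have "path_indep_sets a (Suc 0) = {{}, {a}}" by (auto simp: path_indep_sets_def)
  then show ?case by (simp add: numeral_eq_Suc)
next
  case (3 k)
  have disjoint: "path_indep_sets a (k + 1) \<inter> insert (a + k + 1) ` path_indep_sets a k = {}"
    by (auto simp: path_indep_sets_def)
  have "a + k + 1 \<notin> K" if "K \<in> path_indep_sets a k" for K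
    using that by (auto simp: path_indep_sets_def)
  then have "inj_on (insert (a + k + 1)) (path_indep_sets a k)"
    by (meson inj_onI insert_ident)
  then have "card (path_indep_sets a (k + 2)) =
      card (path_indep_sets a (k + 1)) + card (path_indep_sets a k)"
    using disjoint
    by (simp only: path_indep_sets_Suc_Suc card_Un_disjoint card_image finite_path_indep_sets finite_imageI)
  then show ?case using 3 by (simp add: numeral_eq_Suc)
qed

lemma indep_sets_cycle_edges_id_iff:
  "K \<in> indep_sets m (cycle_edges m id) \<longleftrightarrow>
     K \<subseteq> {..<m} \<and> (\<forall>i<m. i \<in> K \<longrightarrow> (i + 1) mod m \<notin> K)"
  by (auto simp: indep_sets_def cycle_edges_def)

lemma card_cycle_indep_sets_ge: "fib (k + 3) + fib (k + 1) \<le> card (indep_sets (k + 2) (cycle_edges (k + 2) id))"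
proof -
  let ?A = "path_indep_sets 0 (k + 1)" and ?B = "insert (k + 1) ` path_indep_sets 1 (k - 1)"
  have mod_Suc: "(i + 1) mod (k + 2) = (if i = k + 1 then 0 else i + 1)" if "i < k + 2" for i
    using that by auto
  have "?A \<subseteq> indep_sets (k + 2) (cycle_edges (k + 2) id)"
    by (force simp: path_indep_sets_def indep_sets_cycle_edges_id_iff mod_Suc)
  moreover have "?B \<subseteq> indep_sets (k + 2) (cycle_edges (k + 2) id)"
    by (force simp: path_indep_sets_def indep_sets_cycle_edges_id_iff mod_Suc)
  ultimately have subset: "?A \<union> ?B \<subseteq> indep_sets (k + 2) (cycle_edges (k + 2) id)"
    by blast
  have "k + 1 \<notin> K" if "K \<in> path_indep_sets 1 (k - 1)" for K
    using that by (auto simp: path_indep_sets_def)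
  then have "inj_on (insert (k + 1)) (path_indep_sets 1 (k - 1))"
    by (meson inj_onI insert_ident)
  moreover have "?A \<inter> ?B = {}"
    by (auto simp: path_indep_sets_def)
  ultimately have "card (?A \<union> ?B) = card ?A + card (path_indep_sets 1 (k - 1))"
    by (simp add: card_Un_disjoint card_image finite_path_indep_sets)
  also have "\<dots> = fib (k + 3) + fib (k + 1)"
    by (cases k) (simp_all add: card_path_indep_sets numeral_eq_Suc)
  finally show ?thesis
    using card_mono[OF finite_indep_sets subset] by simp
qed

lemma Rdag_sym: "(x, y) \<in> Rdag \<longleftrightarrow> (y, x) \<in> Rdag"
  by (cases x; cases y) (auto simp: Rdag_def)

lemma shape_cycle_edges:
  "shape (cycle_edges m \<sigma>) v =
     {{\<sigma> i, \<sigma> ((i + 1) mod m)} | i. i < m \<and> (v ! \<sigma> i, v ! \<sigma> ((i + 1) mod m)) \<in> Rdag}"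
  unfolding shape_def cycle_edges_def using Rdag_sym by (fastforce simp: doubleton_eq_iff)

lemma good_shapes_subset: "{S. good_shape n E S} \<subseteq> Pow E"
  by (auto simp: good_shape_def shape_def)

lemma finite_words: "finite (words n)"
proof -
  have "finite (UNIV :: letter set)"
    by (rule finite_subset[of _ "{LA, LB, LC, LD}"]) (use letter.exhaust in auto)
  then show ?thesis
    using finite_lists_length_eq[of "UNIV :: letter set" n] by (simp add: words_def)
qed

lemma component_subset: "component P v \<subseteq> insert v P"
proof
  fix w assume "w \<in> component P v"
  then have "(\<lambda>a b. a \<in> P \<and> b \<in> P \<and> ham_adj a b)\<^sup>*\<^sup>* v w" by (simp add: component_def)
  then show "w \<in> insert v P" by (induction rule: rtranclp_induct) auto
qed

section \<open>Words with a prescribed block shape\<close>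

locale embedded_even_cycle =
  fixes n m :: nat and \<sigma> :: "nat \<Rightarrow> nat"
  assumes even_m: "even m"
    and inj_\<sigma>: "inj_on \<sigma> {..<m}"
    and \<sigma>_range: "\<sigma> ` {..<m} \<subseteq> {..<n}"
begin

definition centre :: "nat set \<Rightarrow> nat \<Rightarrow> bool" where
  "centre X p \<longleftrightarrow> (\<exists>i<m. p = \<sigma> i \<and> odd i \<and> i div 2 \<in> X)"

definition block_word :: "nat set \<Rightarrow> nat set \<Rightarrow> letter list" where
  "block_word X I =
     map (\<lambda>p. if centre X p then (if p \<in> I then LC else LB) else (if p \<in> I then LA else LD)) [0..<n]"

definition block_shape :: "nat set \<Rightarrow> nat set set" where
  "block_shape X = {{\<sigma> i, \<sigma> ((i + 1) mod m)} | i. i < m \<and> i div 2 \<in> X}"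

lemma \<sigma>_less: "i < m \<Longrightarrow> \<sigma> i < n"
  using \<sigma>_range by auto

lemma \<sigma>_eq_iff: "i < m \<Longrightarrow> j < m \<Longrightarrow> \<sigma> i = \<sigma> j \<longleftrightarrow> i = j"
  using inj_\<sigma> by (auto dest: inj_onD)

lemma centre_\<sigma>_iff: "i < m \<Longrightarrow> centre X (\<sigma> i) \<longleftrightarrow> odd i \<and> i div 2 \<in> X"
  unfolding centre_def using \<sigma>_eq_iff by auto

lemma Suc_mod_if_even: "i < m \<Longrightarrow> even i \<Longrightarrow> (i + 1) mod m = i + 1"
  using even_m by (cases "i + 1 = m") auto

lemma even_Suc_mod_if_odd: "i < m \<Longrightarrow> odd i \<Longrightarrow> even ((i + 1) mod m)"
  by (cases "i + 1 = m") auto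

lemma block_word_nth:
  "p < n \<Longrightarrow> block_word X I ! p =
     (if centre X p then (if p \<in> I then LC else LB) else (if p \<in> I then LA else LD))"
  by (simp add: block_word_def)

lemma block_word_in_words: "block_word X I \<in> words n"
  by (simp add: block_word_def words_def)

text \<open>Along every edge exactly one endpoint is a centre of a selected block, or none is; a centre
  letter (B or C) and a non-centre letter (A or D) are related unless both mark membership in I,
  and two non-centre letters are never related.\<close>
lemma block_word_edge_related_iff:
  assumes "i < m"
  shows "(block_word X I ! \<sigma> i, block_word X I ! \<sigma> ((i + 1) mod m)) \<in> Rdag \<longleftrightarrow>
         i div 2 \<in> X \<and> \<not> {\<sigma> i, \<sigma> ((i + 1) mod m)} \<subseteq> I"
proof (cases "even i")
  case True
  have next_i: "(i + 1) mod m = i + 1"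
    using Suc_mod_if_even[OF assms True] .
  then have "i + 1 < m"
    using assms by (metis mod_less_divisor not_less_zero neq0_conv)
  have "\<not> centre X (\<sigma> i)" and "centre X (\<sigma> (i + 1)) \<longleftrightarrow> i div 2 \<in> X"
    using True centre_\<sigma>_iff[OF assms] centre_\<sigma>_iff[OF \<open>i + 1 < m\<close>] by auto
  then show ?thesis
    unfolding next_i using \<sigma>_less[OF assms] \<sigma>_less[OF \<open>i + 1 < m\<close>]
    by (auto simp: block_word_nth Rdag_def)
next
  case False
  have "(i + 1) mod m < m"
    using assms by simp
  have "centre X (\<sigma> i) \<longleftrightarrow> i div 2 \<in> X" and "\<not> centre X (\<sigma> ((i + 1) mod m))"
    using False even_Suc_mod_if_odd[OF assms False] centre_\<sigma>_iff[OF assms]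
      centre_\<sigma>_iff[OF \<open>(i + 1) mod m < m\<close>] by auto
  then show ?thesis
    using \<sigma>_less[OF assms] \<sigma>_less[OF \<open>(i + 1) mod m < m\<close>]
    by (auto simp: block_word_nth Rdag_def)
qed

lemma shape_block_word:
  assumes "\<forall>e\<in>block_shape X. \<not> e \<subseteq> I"
  shows "shape (cycle_edges m \<sigma>) (block_word X I) = block_shape X"
proof -
  have "(block_word X I ! \<sigma> i, block_word X I ! \<sigma> ((i + 1) mod m)) \<in> Rdag \<longleftrightarrow> i div 2 \<in> X"
    if "i < m" for i
    using that assms block_word_edge_related_iff[OF that] by (auto simp: block_shape_def)
  then show ?thesis
    unfolding shape_cycle_edges block_shape_def by (blast intro: Collect_cong)
qed

lemma block_shape_subset: "block_shape X \<subseteq> cycle_edges m \<sigma>"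
  by (auto simp: block_shape_def cycle_edges_def)

lemma block_word_in_preimage:
  "\<forall>e\<in>block_shape X. \<not> e \<subseteq> I \<Longrightarrow> block_word X I \<in> preimage n (cycle_edges m \<sigma>) (block_shape X)"
  by (simp add: preimage_def block_word_in_words shape_block_word)

lemma ham_adj_block_word_insert:
  assumes "p < n" "p \<notin> I"
  shows "ham_adj (block_word X I) (block_word X (insert p I))"
proof -
  have "{q. q < n \<and> block_word X I ! q \<noteq> block_word X (insert p I) ! q} = {p}"
    using assms by (auto simp: block_word_nth split: if_splits)
  then show ?thesis
    by (simp add: ham_adj_def block_word_def)
qed

lemma block_word_in_component:
  assumes "finite I" "I \<subseteq> {..<n}" "\<forall>e\<in>block_shape X. \<not> e \<subseteq> I"
  shows "block_word X I \<in> component (preimage n (cycle_edges m \<sigma>) (block_shape X)) (block_word X {})"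
  using assms
proof (induction I rule: finite_induct)
  case empty
  then show ?case by (simp add: component_def)
next
  case (insert p I)
  then have "\<forall>e\<in>block_shape X. \<not> e \<subseteq> I"
    by blast
  then have "block_word X I \<in> preimage n (cycle_edges m \<sigma>) (block_shape X)"
    and "block_word X I \<in> component (preimage n (cycle_edges m \<sigma>) (block_shape X)) (block_word X {})"
    using insert.IH insert.prems(1) block_word_in_preimage by auto
  moreover have "block_word X (insert p I) \<in> preimage n (cycle_edges m \<sigma>) (block_shape X)"
    using insert.prems(2) block_word_in_preimage by blast
  moreover have "ham_adj (block_word X I) (block_word X (insert p I))"
    using insert.hyps(2) insert.prems(1) ham_adj_block_word_insert by blast
  ultimately show ?case
    unfolding component_def by (simp add: rtranclp.rtrancl_into_rtrancl)
qed

lemma marked_positions_block_word: "I \<subseteq> {..<n} \<Longrightarrow> {p. p < n \<and> block_word X I ! p \<in> {LA, LC}} = I"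
  by (auto simp: block_word_nth subset_iff split: if_splits)

lemma card_indep_sets_le_card_component:
  "card (indep_sets n (cycle_edges m \<sigma>)) \<le>
     card (component (preimage n (cycle_edges m \<sigma>) (block_shape X)) (block_word X {}))"
proof -
  let ?P = "preimage n (cycle_edges m \<sigma>) (block_shape X)"
  have "block_word X I \<in> component ?P (block_word X {})" if "I \<in> indep_sets n (cycle_edges m \<sigma>)" for I
  proof -
    have "I \<subseteq> {..<n}" "\<forall>e\<in>cycle_edges m \<sigma>. \<not> e \<subseteq> I"
      using that by (simp_all add: indep_sets_def)
    then show ?thesis
      using block_word_in_component[of I X] block_shape_subset finite_subset[OF _ finite_lessThan] by blast
  qed
  moreover have "inj_on (block_word X) (indep_sets n (cycle_edges m \<sigma>))"
  proof (rule inj_onI)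
    fix I J assume "I \<in> indep_sets n (cycle_edges m \<sigma>)" "J \<in> indep_sets n (cycle_edges m \<sigma>)"
      and "block_word X I = block_word X J"
    then show "I = J"
      using marked_positions_block_word[of I X] marked_positions_block_word[of J X] by (simp add: indep_sets_def)
  qed
  moreover have "finite ?P"
    by (rule finite_subset[OF _ finite_words]) (auto simp: preimage_def)
  then have "finite (component ?P (block_word X {}))"
    using finite_subset[OF component_subset] by blast
  ultimately show ?thesis
    by (metis card_image card_mono image_subsetI)
qed

lemma block_shape_edge_has_centre:
  assumes "e \<in> block_shape X"
  obtains p q where "p \<in> e" "q \<in> e" "p < n" "centre X p" "\<not> centre X q"
proof -
  obtain i where i: "i < m" "i div 2 \<in> X" and e: "e = {\<sigma> i, \<sigma> ((i + 1) mod m)}"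
    using assms by (auto simp: block_shape_def)
  have "(i + 1) mod m < m"
    using i by simp
  show ?thesis
  proof (cases "even i")
    case True
    then have "(i + 1) mod m = i + 1" "(i + 1) div 2 = i div 2"
      using Suc_mod_if_even[OF i(1)] by auto
    then show ?thesis
      using that[of "\<sigma> ((i + 1) mod m)" "\<sigma> i"] e i True \<open>(i + 1) mod m < m\<close>
      by (simp add: centre_\<sigma>_iff \<sigma>_less)
  next
    case False
    then show ?thesis
      using that[of "\<sigma> i" "\<sigma> ((i + 1) mod m)"] e i \<open>(i + 1) mod m < m\<close>
        even_Suc_mod_if_odd[OF i(1) False]
      by (simp add: centre_\<sigma>_iff \<sigma>_less)
  qed
qed

lemma preimage_block_shape_antipodal:
  "\<exists>v\<in>preimage n (cycle_edges m \<sigma>) (block_shape X).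
     \<exists>v'\<in>preimage n (cycle_edges m \<sigma>) (block_shape X). \<forall>i<n. v ! i \<noteq> v' ! i"
proof -
  define J where "J = {p. p < n \<and> centre X p}"
  have "\<not> e \<subseteq> J \<and> \<not> e \<subseteq> {..<n} - J" if e: "e \<in> block_shape X" for e
  proof -
    obtain p q where "p \<in> e" "q \<in> e" "p < n" "centre X p" "\<not> centre X q"
      using block_shape_edge_has_centre[OF e] .
    then show ?thesis
      by (auto simp: J_def)
  qed
  then have "block_word X J \<in> preimage n (cycle_edges m \<sigma>) (block_shape X)"
    and "block_word X ({..<n} - J) \<in> preimage n (cycle_edges m \<sigma>) (block_shape X)"
    using block_word_in_preimage by blast+
  moreover have "\<forall>i<n. block_word X J ! i \<noteq> block_word X ({..<n} - J) ! i"
    by (simp add: J_def block_word_nth)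
  ultimately show ?thesis
    by blast
qed

lemma good_shape_block_shape:
  assumes "((1 + sqrt 5) / 2) ^ n + ((1 - sqrt 5) / 2) ^ n \<le> real (card (indep_sets n (cycle_edges m \<sigma>)))"
  shows "good_shape n (cycle_edges m \<sigma>) (block_shape X)"
proof -
  have "block_word X {} \<in> preimage n (cycle_edges m \<sigma>) (block_shape X)"
    by (rule block_word_in_preimage) (auto simp: block_shape_def)
  moreover have "((1 + sqrt 5) / 2) ^ n + ((1 - sqrt 5) / 2) ^ n \<le>
      real (card (component (preimage n (cycle_edges m \<sigma>) (block_shape X)) (block_word X {})))"
    using assms card_indep_sets_le_card_component[of X] by linarith
  ultimately show ?thesis
    unfolding good_shape_def using preimage_block_shape_antipodal by (auto simp: preimage_def)
qed

lemma block_edge_in_block_shape_iff: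
  assumes "j < m div 2"
  shows "{\<sigma> (2 * j), \<sigma> (2 * j + 1)} \<in> block_shape X \<longleftrightarrow> j \<in> X"
proof
  have "2 * j + 1 < m"
    using assms even_m by presburger
  assume "{\<sigma> (2 * j), \<sigma> (2 * j + 1)} \<in> block_shape X"
  then obtain i where i: "i < m" "i div 2 \<in> X" and "{\<sigma> (2 * j), \<sigma> (2 * j + 1)} = {\<sigma> i, \<sigma> ((i + 1) mod m)}"
    by (auto simp: block_shape_def)
  then have "\<sigma> (2 * j + 1) = \<sigma> i \<or> \<sigma> (2 * j) = \<sigma> i"
    by (auto simp: doubleton_eq_iff)
  then have "i = 2 * j + 1 \<or> i = 2 * j"
    using \<sigma>_eq_iff \<open>2 * j + 1 < m\<close> i(1) by auto
  with i(2) show "j \<in> X"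
    by auto
next
  assume "j \<in> X"
  moreover have "2 * j + 1 < m"
    using assms even_m by presburger
  ultimately show "{\<sigma> (2 * j), \<sigma> (2 * j + 1)} \<in> block_shape X"
    unfolding block_shape_def by (intro CollectI exI[of _ "2 * j"]) simp
qed

lemma inj_on_block_shape: "inj_on block_shape (Pow {..<m div 2})"
proof (rule inj_onI)
  fix X Y assume XY: "X \<in> Pow {..<m div 2}" "Y \<in> Pow {..<m div 2}" "block_shape X = block_shape Y"
  have "j \<in> X \<longleftrightarrow> j \<in> Y" for j
    using XY block_edge_in_block_shape_iff[of j X] block_edge_in_block_shape_iff[of j Y]
    by (cases "j < m div 2") auto
  then show "X = Y"
    by blast
qed

lemma card_good_shapes_ge:
  assumes "((1 + sqrt 5) / 2) ^ n + ((1 - sqrt 5) / 2) ^ n \<le> real (card (indep_sets n (cycle_edges m \<sigma>)))"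
  shows "2 ^ (m div 2) \<le> card {S. good_shape n (cycle_edges m \<sigma>) S}"
proof -
  have "block_shape ` Pow {..<m div 2} \<subseteq> {S. good_shape n (cycle_edges m \<sigma>) S}"
    using good_shape_block_shape[OF assms] by blast
  moreover have "finite {S. good_shape n (cycle_edges m \<sigma>) S}"
    using finite_subset[OF good_shapes_subset finite_Pow_iff[THEN iffD2, OF finite_cycle_edges]] .
  moreover have "card (block_shape ` Pow {..<m div 2}) = 2 ^ (m div 2)"
    by (simp add: card_image[OF inj_on_block_shape] card_Pow)
  ultimately show ?thesis
    by (metis card_mono)
qed

lemma \<sigma>_in_image_iff: "i < m \<Longrightarrow> K \<subseteq> {..<m} \<Longrightarrow> \<sigma> i \<in> \<sigma> ` K \<longleftrightarrow> i \<in> K"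
  using \<sigma>_eq_iff by auto

lemma image_in_indep_sets:
  assumes "K \<in> indep_sets m (cycle_edges m id)"
  shows "\<sigma> ` K \<in> indep_sets n (cycle_edges m \<sigma>)"
proof -
  have K: "K \<subseteq> {..<m}" "\<forall>i<m. i \<in> K \<longrightarrow> (i + 1) mod m \<notin> K"
    using assms by (simp_all add: indep_sets_cycle_edges_id_iff)
  have "\<not> {\<sigma> i, \<sigma> ((i + 1) mod m)} \<subseteq> \<sigma> ` K" if "i < m" for i
    using K \<sigma>_in_image_iff[OF that K(1)] \<sigma>_in_image_iff[of "(i + 1) mod m", OF _ K(1)] that by simp
  moreover have "\<sigma> ` K \<subseteq> {..<n}"
    using K(1) \<sigma>_range by blast
  ultimately show ?thesis
    unfolding indep_sets_def cycle_edges_def by blast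
qed

lemma inj_on_image_indep_sets: "inj_on ((`) \<sigma>) (indep_sets m (cycle_edges m id))"
  using inj_on_image_Pow[OF inj_\<sigma>] by (rule inj_on_subset) (auto simp: indep_sets_def)

lemma card_indep_sets_cycle_le:
  "card (indep_sets m (cycle_edges m id)) \<le> card (indep_sets n (cycle_edges m \<sigma>))"
  using card_mono[OF finite_indep_sets] card_image[OF inj_on_image_indep_sets] image_in_indep_sets
  by (metis image_subsetI)

text \<open>A vertex outside the cycle may be added to any independent set.\<close>
lemma double_card_indep_sets_cycle_le:
  assumes "u < n" "u \<notin> \<sigma> ` {..<m}"
  shows "2 * card (indep_sets m (cycle_edges m id)) \<le> card (indep_sets n (cycle_edges m \<sigma>))"
proof -
  let ?K = "indep_sets m (cycle_edges m id)" and ?add_u = "\<lambda>K. insert u (\<sigma> ` K)"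
  have u_notin: "u \<notin> \<sigma> ` K" if "K \<in> ?K" for K
    using that assms(2) unfolding indep_sets_def by blast
  have "u \<notin> e" if e: "e \<in> cycle_edges m \<sigma>" for e
  proof -
    obtain i where "i < m" "e = {\<sigma> i, \<sigma> ((i + 1) mod m)}"
      using e by (auto simp: cycle_edges_def)
    moreover have "(i + 1) mod m < m"
      using \<open>i < m\<close> by simp
    ultimately show ?thesis
      using assms(2) by auto
  qed
  then have add_u_in: "?add_u K \<in> indep_sets n (cycle_edges m \<sigma>)" if "K \<in> ?K" for K
    using insert_in_indep_sets image_in_indep_sets[OF that] assms(1) by blast
  have "inj_on ?add_u ?K"
  proof (rule inj_onI)
    fix K L assume "K \<in> ?K" "L \<in> ?K" "?add_u K = ?add_u L"
    then have "\<sigma> ` K = \<sigma> ` L"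
      using u_notin by (metis insert_ident)
    then show "K = L"
      using inj_on_image_indep_sets \<open>K \<in> ?K\<close> \<open>L \<in> ?K\<close> by (simp add: inj_on_eq_iff)
  qed
  moreover have "\<sigma> ` K \<noteq> ?add_u L" if "K \<in> ?K" for K L
    using u_notin[OF that] by (metis insertI1)
  then have "(`) \<sigma> ` ?K \<inter> ?add_u ` ?K = {}"
    by auto
  ultimately have "card ((`) \<sigma> ` ?K \<union> ?add_u ` ?K) = 2 * card ?K"
    using card_image[OF inj_on_image_indep_sets]
    by (simp add: card_Un_disjoint card_image finite_indep_sets)
  moreover have "(`) \<sigma> ` ?K \<union> ?add_u ` ?K \<subseteq> indep_sets n (cycle_edges m \<sigma>)"
    using image_in_indep_sets add_u_in by blast
  ultimately show ?thesis
    by (metis card_mono finite_indep_sets)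
qed

end

lemma base_edges_even_eq: "base_edges_even n \<sigma> = cycle_edges n \<sigma>"
  by (simp add: base_edges_even_def cycle_edges_def)

lemma base_edges_odd_eq: "base_edges_odd n \<sigma> = cycle_edges (n - 1) \<sigma>"
  by (simp add: base_edges_odd_def cycle_edges_def)

lemma even_base_graph:
  assumes "n \<ge> 1" "even n" "bij_betw \<sigma> {0..<n} {0..<n}"
  shows "embedded_even_cycle n n \<sigma>"
    and "fib (n + 1) + fib (n - 1) \<le> card (indep_sets n (cycle_edges n \<sigma>))"
proof -
  show cycle: "embedded_even_cycle n n \<sigma>"
    using assms(2,3) by unfold_locales (auto simp: bij_betw_def atLeast0LessThan)
  have "n \<ge> 2"
    using assms(1,2) by presburger
  then obtain k where "n = k + 2"
    by (metis le_add_diff_inverse2)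
  then show "fib (n + 1) + fib (n - 1) \<le> card (indep_sets n (cycle_edges n \<sigma>))"
    using card_cycle_indep_sets_ge[of k] embedded_even_cycle.card_indep_sets_cycle_le[OF cycle]
    by (simp add: numeral_eq_Suc)
qed

lemma odd_base_graph:
  assumes "odd n" "u < n" "bij_betw \<sigma> {0..<n - 1} ({0..<n} - {u})"
  shows "embedded_even_cycle n (n - 1) \<sigma>"
    and "fib (n + 1) + fib (n - 1) \<le> card (indep_sets n (cycle_edges (n - 1) \<sigma>))"
proof -
  have "even (n - 1)"
    using assms(1) by simp
  then show cycle: "embedded_even_cycle n (n - 1) \<sigma>"
    using assms(3) by unfold_locales (auto simp: bij_betw_def atLeast0LessThan)
  have "fib (n + 1) + fib (n - 1) \<le> 2 * card (indep_sets (n - 1) (cycle_edges (n - 1) id))"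
  proof (cases "n = 1")
    case True
    then have "indep_sets (n - 1) (cycle_edges (n - 1) id) = {{}}"
      by (auto simp: indep_sets_def cycle_edges_def)
    with True show ?thesis
      by simp
  next
    case False
    then have "n \<ge> 3"
      using assms(1) by presburger
    then obtain k where "n = k + 3"
      by (metis le_add_diff_inverse2)
    then show ?thesis
      using lucas_Suc_le_double[of k] card_cycle_indep_sets_ge[of k] by (simp add: numeral_eq_Suc)
  qed
  moreover have "u \<notin> \<sigma> ` {..<n - 1}"
    using assms(3) by (auto simp: bij_betw_def atLeast0LessThan)
  ultimately show "fib (n + 1) + fib (n - 1) \<le> card (indep_sets n (cycle_edges (n - 1) \<sigma>))"
    using embedded_even_cycle.double_card_indep_sets_cycle_le[OF cycle assms(2)] by linarith
qed

lemma base_graph_even_cycle: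
  assumes "n \<ge> 1"
    and "(even n \<and> bij_betw \<sigma> {0..<n} {0..<n} \<and> EH = base_edges_even n \<sigma>) \<or>
         (odd n \<and> u < n \<and> bij_betw \<sigma> {0..<n-1} ({0..<n} - {u}) \<and> EH = base_edges_odd n \<sigma>)"
  obtains m where "EH = cycle_edges m \<sigma>" "embedded_even_cycle n m \<sigma>" "m div 2 = n div 2"
    "fib (n + 1) + fib (n - 1) \<le> card (indep_sets n (cycle_edges m \<sigma>))"
  using assms(2)
proof (elim disjE conjE)
  assume "even n" "bij_betw \<sigma> {0..<n} {0..<n}" "EH = base_edges_even n \<sigma>"
  then show thesis
    using that[of n] even_base_graph[OF assms(1)] by (simp add: base_edges_even_eq)
next
  assume "odd n" "u < n" "bij_betw \<sigma> {0..<n - 1} ({0..<n} - {u})" "EH = base_edges_odd n \<sigma>"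
  moreover have "(n - 1) div 2 = n div 2"
    using \<open>odd n\<close> by presburger
  ultimately show thesis
    using that[of "n - 1"] odd_base_graph by (simp add: base_edges_odd_eq)
qed

lemma sqrt2_pow_le: "sqrt 2 ^ (n - 1) \<le> (2::real) ^ (n div 2)"
proof -
  have "sqrt 2 ^ (n - 1) \<le> sqrt 2 ^ (2 * (n div 2))"
    by (rule power_increasing) auto
  also have "\<dots> = 2 ^ (n div 2)"
    by (simp add: power_mult)
  finally show ?thesis .
qed

theorem theorem2:
  fixes n :: nat and \<sigma> :: "nat \<Rightarrow> nat" and u :: nat and EH :: "nat set set"
  assumes "n \<ge> 1"
    and "(even n \<and> bij_betw \<sigma> {0..<n} {0..<n} \<and> EH = base_edges_even n \<sigma>) \<or>
         (odd n \<and> u < n \<and> bij_betw \<sigma> {0..<n-1} ({0..<n} - {u}) \<and> EH = base_edges_odd n \<sigma>)"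
  shows "real (card {S. good_shape n EH S}) \<ge> sqrt 2 ^ (n - 1)"
proof -
  obtain m where EH: "EH = cycle_edges m \<sigma>" and cycle: "embedded_even_cycle n m \<sigma>"
    and half: "m div 2 = n div 2"
    and lucas_le: "fib (n + 1) + fib (n - 1) \<le> card (indep_sets n (cycle_edges m \<sigma>))"
    using base_graph_even_cycle[OF assms] .
  obtain k where "n = k + 1"
    using assms(1) by (metis add.commute le_add_diff_inverse)
  then have "real (fib (n + 1) + fib (n - 1)) = ((1 + sqrt 5) / 2) ^ n + ((1 - sqrt 5) / 2) ^ n"
    using lucas_closed_form[of k] by simp
  then have "2 ^ (n div 2) \<le> card {S. good_shape n EH S}"
    using embedded_even_cycle.card_good_shapes_ge[OF cycle] lucas_le EH half by (metis of_nat_le_iff)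
  then have "(2::real) ^ (n div 2) \<le> real (card {S. good_shape n EH S})"
    by (metis of_nat_le_iff of_nat_numeral of_nat_power)
  then show ?thesis
    using sqrt2_pow_le[of n] by linarith
qed

end
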